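(* Let $X$ be a finite simplicial complex. Then $\partial_J\circ\partial_J=0$ on $\widehat{C}(X)$; hence $(\widehat{C}(X),\partial_J)$ is a chain complex, with $\partial_J$ of bidegree $(-1,0)$.
   Context: Let $X$ be a finite simplicial complex. Its face poset $\mathcal{F}(X)$ is the directed graph whose vertices are the nonempty simplices of $X$, with a directed edge $\sigma\to\tau$ iff $\tau$ is a codimension-one face of $\sigma$. A matching on $\mathcal{F}(X)$ is a set $m$ of edges of $\mathcal{F}(X)$, no two sharing an endpoint. Given a matching $m$, let $\mathcal{F}_m(X)$ be the directed graph obtained from $\mathcal{F}(X)$ by reversing every edge in $m$; a directed cycle of $\mathcal{F}_m(X)$ (closed directed path without repeated vertices) is supported by $m$, and $J(m)$ is the number of directed cycles supported by $m$. The matching complex $\mathrm{M}(X)$ has vertex set the edges of $\mathcal{F}(X)$ and simplices the nonempty matchings; $m_\sigma$ denotes the matching of a simplex $\sigma$. Let $\widehat{C}_i^j(X)$ be the $\mathbb{F}_2$-vector space with basis the $i$-dimensional simplices $\sigma$ of $\mathrm{M}(X)$ (matchings with $i+1$ edges) with $J(m_\sigma)=j$, and $\widehat{C}(X)=\bigoplus_{i,j\ge0}\widehat{C}_i^j(X)$. The simplicial boundary $\partial$ sends $\sigma$ to the mod-2 sum of its codimension-one faces (and sends $0$-simplices to $0$). Define $\partial_J(\sigma)$ as the sum of those codimension-one faces $\tau$ of $\sigma$ with $J(m_\tau)=J(m_\sigma)$, and $\partial_d=\partial-\partial_J$ (the sum of faces $\tau$ with $J(m_\tau)<J(m_\sigma)$).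 *)

theory Defs
  imports Main
begin

definition simplicial_complex :: "'v set set \<Rightarrow> bool" where
  "simplicial_complex K \<longleftrightarrow> finite K \<and> (\<forall>\<sigma>\<in>K. \<sigma> \<noteq> {} \<and> finite \<sigma>) \<and>
     (\<forall>\<sigma>\<in>K. \<forall>\<tau>. \<tau> \<subseteq> \<sigma> \<and> \<tau> \<noteq> {} \<longrightarrow> \<tau> \<in> K)"

definition face_edges :: "'v set set \<Rightarrow> ('v set \<times> 'v set) set" where
  "face_edges K = {(\<sigma>, \<tau>). \<sigma> \<in> K \<and> \<tau> \<in> K \<and> \<tau> \<subseteq> \<sigma> \<and> card \<sigma> = card \<tau> + 1}"

definition is_matching :: "'v set set \<Rightarrow> ('v set \<times> 'v set) set \<Rightarrow> bool" where
  "is_matching K m \<longleftrightarrow> m \<subseteq> face_edges K \<and>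
     (\<forall>e\<in>m. \<forall>e'\<in>m. e \<noteq> e' \<longrightarrow> {fst e, snd e} \<inter> {fst e', snd e'} = {})"

definition reversed_arcs :: "'v set set \<Rightarrow> ('v set \<times> 'v set) set \<Rightarrow> ('v set \<times> 'v set) set" where
  "reversed_arcs K m = (face_edges K - m) \<union> {(\<tau>, \<sigma>). (\<sigma>, \<tau>) \<in> m}"

definition cycle_arcs :: "'a list \<Rightarrow> ('a \<times> 'a) set" where
  "cycle_arcs vs = {(vs ! i, vs ! (Suc i mod length vs)) | i. i < length vs}"

text \<open>Directed cycles of a digraph with arc set G (closed directed paths without repeated
  vertices), each cycle identified with its set of arcs (so rotations are not distinguished).\<close>
definition directed_cycles :: "('a \<times> 'a) set \<Rightarrow> ('a \<times> 'a) set set" where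
  "directed_cycles G = {cycle_arcs vs | vs. vs \<noteq> [] \<and> distinct vs \<and> cycle_arcs vs \<subseteq> G}"

definition J :: "'v set set \<Rightarrow> ('v set \<times> 'v set) set \<Rightarrow> nat" where
  "J K m = card (directed_cycles (reversed_arcs K m))"

definition matching_simplices :: "'v set set \<Rightarrow> ('v set \<times> 'v set) set set" where
  "matching_simplices K = {m. is_matching K m \<and> m \<noteq> {}}"

text \<open>partial_J on a single simplex: codimension-one faces with the same J
  (0-simplices have boundary zero). Chains over F_2 are finite sets of simplices.\<close>
definition dJ_simplex :: "'v set set \<Rightarrow> ('v set \<times> 'v set) set \<Rightarrow> ('v set \<times> 'v set) set set" where
  "dJ_simplex K m = {m - {e} | e. e \<in> m \<and> card m \<ge> 2 \<and> J K (m - {e}) = J K m}"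

definition dJ :: "'v set set \<Rightarrow> ('v set \<times> 'v set) set set \<Rightarrow> ('v set \<times> 'v set) set set" where
  "dJ K c = {\<tau>. odd (card {m \<in> c. \<tau> \<in> dJ_simplex K m})}"

end

theory Submission
  imports Defs
begin

text \<open>Removing edges from a matching can only destroy directed cycles, so J is monotone. In a
  directed cycle of the modified face poset the rising arcs are the reversed matched edges; the
  dimension returns to its start, so rising and falling arcs are equally many, and no two rising
  arcs are consecutive, so every falling arc is entered through a matched edge and cannot itself
  be matched. Hence a cycle of F_{m'} survives in F_m for m' \<subseteq> m. Consequently, if \<rho> arises
  from m by deleting two edges with J \<rho> = J m, both intermediate faces have the same J as well,
  and every \<rho> is reached from m along an even number (0 or 2) of \<partial>_J-paths.\<close>

lemma finite_face_edges: "simplicial_complex K \<Longrightarrow> finite (face_edges K)"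
  unfolding simplicial_complex_def face_edges_def
  by (rule finite_subset[of _ "K \<times> K"]) auto

lemma is_matching_finite: "simplicial_complex K \<Longrightarrow> is_matching K m \<Longrightarrow> finite m"
  using finite_face_edges is_matching_def finite_subset by metis

lemma is_matching_subset: "is_matching K m \<Longrightarrow> m' \<subseteq> m \<Longrightarrow> is_matching K m'"
  unfolding is_matching_def by blast

lemma is_matching_endpoint_unique:
  assumes "is_matching K m" "(x, y) \<in> m" "e \<in> m" "x = fst e \<or> x = snd e"
  shows "e = (x, y)"
  using assms unfolding is_matching_def by fastforce

lemma finite_reversed_arcs:
  assumes "simplicial_complex K" "is_matching K m"
  shows "finite (reversed_arcs K m)"
proof -
  have "{(\<tau>, \<sigma>). (\<sigma>, \<tau>) \<in> m} = prod.swap ` m" by force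
  then show ?thesis
    using is_matching_finite[OF assms] finite_face_edges[OF assms(1)]
    unfolding reversed_arcs_def by simp
qed

lemma bij_betw_Suc_mod: "0 < n \<Longrightarrow> bij_betw (\<lambda>i. Suc i mod n) {..<n} {..<n}"
proof -
  assume "0 < n"
  have "inj_on (\<lambda>i. Suc i mod n) {..<n}"
  proof (rule inj_onI)
    fix i j assume "i \<in> {..<n}" "j \<in> {..<n}" "Suc i mod n = Suc j mod n"
    then show "i = j" by (cases "Suc i = n"; cases "Suc j = n") (auto simp: Suc_lessI)
  qed
  moreover have "(\<lambda>i. Suc i mod n) ` {..<n} \<subseteq> {..<n}" using \<open>0 < n\<close> by auto
  ultimately show ?thesis by (simp add: bij_betw_def endo_inj_surj)
qed

lemma card_rises_eq_card_falls:
  fixes h :: "nat \<Rightarrow> nat"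
  assumes step: "\<And>i. i < n \<Longrightarrow> h (Suc i mod n) = h i + 1 \<or> h i = h (Suc i mod n) + 1"
  shows "card {i. i < n \<and> h (Suc i mod n) = h i + 1} = card {i. i < n \<and> h i = h (Suc i mod n) + 1}"
    (is "card ?U = card ?D")
proof (cases "n = 0")
  case False
  let ?\<delta> = "\<lambda>i. int (h (Suc i mod n)) - int (h i)"
  have "(\<Sum>i<n. int (h (Suc i mod n))) = (\<Sum>i<n. int (h i))"
    using sum.reindex_bij_betw[OF bij_betw_Suc_mod, of n "\<lambda>i. int (h i)"] False by simp
  then have "(\<Sum>i<n. ?\<delta> i) = 0" by (simp add: sum_subtractf)
  moreover have "{..<n} = ?U \<union> ?D" "?U \<inter> ?D = {}" using step by auto
  ultimately have "(\<Sum>i\<in>?U. ?\<delta> i) + (\<Sum>i\<in>?D. ?\<delta> i) = 0"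
    by (metis (no_types, lifting) finite_Collect_conjI finite_lessThan finite_Un sum.union_disjoint)
  moreover have "(\<Sum>i\<in>?U. ?\<delta> i) = (\<Sum>i\<in>?U. 1)" "(\<Sum>i\<in>?D. ?\<delta> i) = (\<Sum>i\<in>?D. -1)"
    by (auto intro: sum.cong)
  ultimately show ?thesis by simp
qed simp

lemma falling_arc_entered_by_matched_edge:
  assumes m: "is_matching K m" and ne: "vs \<noteq> []"
    and cyc: "cycle_arcs vs \<subseteq> reversed_arcs K m"
    and i: "i < length vs" and falling: "(vs ! (Suc i mod length vs), vs ! i) \<notin> m"
  shows "\<exists>k < length vs. Suc k mod length vs = i \<and> (vs ! i, vs ! k) \<in> m"
proof -
  define n where "n = length vs"
  define nx where "nx i = Suc i mod n" for i
  define U where "U = {i. i < n \<and> (vs ! nx i, vs ! i) \<in> m}"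
  define D where "D = {i. i < n \<and> (vs ! nx i, vs ! i) \<notin> m}"
  have n: "0 < n" using ne n_def by simp
  have arc: "(vs ! i, vs ! nx i) \<in> reversed_arcs K m" if "i < n" for i
    using cyc that unfolding cycle_arcs_def n_def nx_def by blast
  have rises: "card (vs ! nx i) = card (vs ! i) + 1" if "i \<in> U" for i
    using that m unfolding U_def is_matching_def face_edges_def by auto
  have falls: "card (vs ! i) = card (vs ! nx i) + 1" if "i \<in> D" for i
    using that arc[of i] unfolding D_def reversed_arcs_def face_edges_def by auto
  have U_eq: "U = {i. i < n \<and> card (vs ! nx i) = card (vs ! i) + 1}"
    and D_eq: "D = {i. i < n \<and> card (vs ! i) = card (vs ! nx i) + 1}"
    using rises falls unfolding U_def D_def by (auto; fastforce)+
  have "card U = card D"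
    unfolding U_eq D_eq nx_def
    by (rule card_rises_eq_card_falls) (use rises falls in \<open>auto simp: U_def D_def nx_def\<close>)
  \<comment> \<open>two consecutive rising arcs would put \<open>vs ! nx i\<close> into two matched edges\<close>
  moreover have "nx ` U \<subseteq> D"
  proof
    fix j assume "j \<in> nx ` U"
    then obtain i where iU: "i \<in> U" and j: "j = nx i" by blast
    have "(vs ! j, vs ! i) \<in> m" using iU j unfolding U_def by simp
    moreover have "vs ! j \<noteq> vs ! i" using rises[OF iU] j by auto
    ultimately have "(vs ! nx j, vs ! j) \<notin> m"
      using is_matching_endpoint_unique[OF m] by fastforce
    then show "j \<in> D" using j n unfolding D_def nx_def by simp
  qed
  moreover have "inj_on nx U"
    using bij_betw_Suc_mod[OF n] unfolding bij_betw_def nx_def U_def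
    by (rule inj_on_subset[OF conjunct1]) auto
  ultimately have "nx ` U = D"
    using card_subset_eq[of D "nx ` U"] card_image[of nx U] by (simp add: D_def)
  moreover have "i \<in> D" using i falling unfolding D_def n_def nx_def by simp
  ultimately obtain k where "k \<in> U" "nx k = i" by blast
  then show ?thesis unfolding U_def nx_def n_def by auto
qed

lemma cycle_arcs_reversed_arcs_mono:
  assumes m: "is_matching K m" and sub: "m' \<subseteq> m"
    and ne: "vs \<noteq> []" and cyc: "cycle_arcs vs \<subseteq> reversed_arcs K m'"
  shows "cycle_arcs vs \<subseteq> reversed_arcs K m"
proof
  fix a assume a_cyc: "a \<in> cycle_arcs vs"
  then obtain i where i: "i < length vs" and a: "a = (vs ! i, vs ! (Suc i mod length vs))"
    unfolding cycle_arcs_def by blast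
  show "a \<in> reversed_arcs K m"
  proof (cases "(vs ! (Suc i mod length vs), vs ! i) \<in> m'")
    case True
    then show ?thesis using sub a unfolding reversed_arcs_def by auto
  next
    case False
    have "a \<in> reversed_arcs K m'" using a_cyc cyc by blast
    then have a_edge: "a \<in> face_edges K" "a \<notin> m'"
      using False a unfolding reversed_arcs_def by auto
    obtain k where entry: "(vs ! i, vs ! k) \<in> m'"
      using falling_arc_entered_by_matched_edge[OF is_matching_subset[OF m sub] ne cyc i False]
      by blast
    have "a \<notin> m"
    proof
      assume "a \<in> m"
      then have "a = (vs ! i, vs ! k)"
        using is_matching_endpoint_unique[OF m, of "vs ! i" "vs ! k" a] entry sub a by auto
      then show False using entry a_edge(2) by simp
    qed
    then show ?thesis using a_edge(1) unfolding reversed_arcs_def by simp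
  qed
qed

lemma directed_cycles_subset_Pow: "directed_cycles G \<subseteq> Pow G"
  unfolding directed_cycles_def by blast

lemma directed_cycles_mono:
  assumes "\<And>vs. vs \<noteq> [] \<Longrightarrow> cycle_arcs vs \<subseteq> G \<Longrightarrow> cycle_arcs vs \<subseteq> H"
  shows "directed_cycles G \<subseteq> directed_cycles H"
  unfolding directed_cycles_def using assms by blast

lemma J_mono:
  assumes K: "simplicial_complex K" and m: "is_matching K m" and sub: "m' \<subseteq> m"
  shows "J K m' \<le> J K m"
  unfolding J_def
proof (rule card_mono)
  show "finite (directed_cycles (reversed_arcs K m))"
    using finite_subset[OF directed_cycles_subset_Pow] finite_reversed_arcs[OF K m] by simp
  show "directed_cycles (reversed_arcs K m') \<subseteq> directed_cycles (reversed_arcs K m)"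
    by (rule directed_cycles_mono) (rule cycle_arcs_reversed_arcs_mono[OF m sub])
qed

lemma finite_dJ_simplex: "finite m \<Longrightarrow> finite (dJ_simplex K m)"
  by (rule finite_subset[of _ "(\<lambda>e. m - {e}) ` m"]) (auto simp: dJ_simplex_def)

lemma dJ_simplex_twiceE:
  assumes "finite m" "\<sigma> \<in> dJ_simplex K m" "\<rho> \<in> dJ_simplex K \<sigma>"
  obtains a b where "a \<in> m" "b \<in> m" "a \<noteq> b" "\<sigma> = m - {a}" "\<rho> = m - {a, b}"
    "3 \<le> card m" "J K \<rho> = J K m"
proof -
  obtain a b where "a \<in> m" "\<sigma> = m - {a}" "J K \<sigma> = J K m"
    "b \<in> \<sigma>" "\<rho> = \<sigma> - {b}" "2 \<le> card \<sigma>" "J K \<rho> = J K \<sigma>"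
    using assms(2,3) unfolding dJ_simplex_def by blast
  with assms(1) show thesis by (intro that[of a b]) auto
qed

lemma dJ_simplex_twiceI:
  assumes K: "simplicial_complex K" and m: "is_matching K m"
    and ab: "a \<in> m" "b \<in> m" "a \<noteq> b" and card_m: "3 \<le> card m"
    and J_eq: "J K (m - {a, b}) = J K m"
  shows "m - {a} \<in> dJ_simplex K m" "m - {a, b} \<in> dJ_simplex K (m - {a})"
proof -
  have "J K (m - {a, b}) \<le> J K (m - {a})" "J K (m - {a}) \<le> J K m"
    using J_mono[OF K is_matching_subset[OF m, of "m - {a}"], of "m - {a, b}"]
      J_mono[OF K m, of "m - {a}"] by auto
  then have J_mid: "J K (m - {a}) = J K m" using J_eq by simp
  show "m - {a} \<in> dJ_simplex K m"
    unfolding dJ_simplex_def using ab card_m J_mid by (intro CollectI exI[of _ a]) auto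
  have "card (m - {a}) = card m - 1" using ab(1) is_matching_finite[OF K m] by simp
  moreover have "m - {a, b} = m - {a} - {b}" by blast
  ultimately show "m - {a, b} \<in> dJ_simplex K (m - {a})"
    unfolding dJ_simplex_def using ab card_m J_eq J_mid
    by (intro CollectI exI[of _ b]) auto
qed

lemma even_card_dJ_simplex_twice:
  assumes K: "simplicial_complex K" and m: "is_matching K m"
  shows "even (card {\<sigma> \<in> dJ_simplex K m. \<rho> \<in> dJ_simplex K \<sigma>})" (is "even (card ?S)")
proof (cases "?S = {}")
  case True
  then show ?thesis unfolding True by simp
next
  case False
  have fin: "finite m" using is_matching_finite[OF K m] .
  obtain \<sigma> where "\<sigma> \<in> ?S" using False by blast
  then obtain a b where ab: "a \<in> m" "b \<in> m" "a \<noteq> b" and \<rho>: "\<rho> = m - {a, b}"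
    and card_m: "3 \<le> card m" and J_eq: "J K \<rho> = J K m"
    using dJ_simplex_twiceE[OF fin] by (metis (no_types, lifting) mem_Collect_eq)
  have "?S = {m - {a}, m - {b}}"
  proof
    show "?S \<subseteq> {m - {a}, m - {b}}"
    proof
      fix \<sigma>' assume "\<sigma>' \<in> ?S"
      then obtain a' b' where "a' \<in> m" "b' \<in> m" "\<sigma>' = m - {a'}" "\<rho> = m - {a', b'}"
        using dJ_simplex_twiceE[OF fin] by (metis (no_types, lifting) mem_Collect_eq)
      then have "a' \<in> {a, b}" using ab \<rho> by blast
      then show "\<sigma>' \<in> {m - {a}, m - {b}}" using \<open>\<sigma>' = m - {a'}\<close> by blast
    qed
  next
    show "{m - {a}, m - {b}} \<subseteq> ?S"
      using dJ_simplex_twiceI[OF K m ab card_m] dJ_simplex_twiceI[OF K m ab(2,1) _ card_m]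
        J_eq \<rho> by (auto simp: insert_commute)
  qed
  moreover have "m - {a} \<noteq> m - {b}" using ab by blast
  ultimately show ?thesis by simp
qed

lemma mod2_extension_square_zero:
  fixes d :: "'a \<Rightarrow> 'a set"
  defines "lin c \<equiv> {\<tau>. odd (card {m \<in> c. \<tau> \<in> d m})}"
  assumes c: "finite c" and fin_d: "\<And>m. m \<in> c \<Longrightarrow> finite (d m)"
    and even_paths: "\<And>m \<rho>. m \<in> c \<Longrightarrow> even (card {\<sigma> \<in> d m. \<rho> \<in> d \<sigma>})"
  shows "lin (lin c) = {}"
proof (rule ccontr)
  assume "lin (lin c) \<noteq> {}"
  then obtain \<rho> where odd_\<rho>: "odd (card {\<sigma> \<in> lin c. \<rho> \<in> d \<sigma>})"
    unfolding lin_def by blast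
  define N where "N \<sigma> = card {m \<in> c. \<sigma> \<in> d m}" for \<sigma>
  define T where "T = {\<sigma> \<in> (\<Union>m\<in>c. d m). \<rho> \<in> d \<sigma>}"
  have T: "finite T" using c fin_d unfolding T_def by auto
  have odd_N: "{\<sigma> \<in> lin c. \<rho> \<in> d \<sigma>} = {\<sigma> \<in> T. odd (N \<sigma>)}"
    unfolding lin_def T_def N_def by (auto dest: odd_card_imp_not_empty)
  have "(\<Sum>\<sigma>\<in>T. N \<sigma>) = (\<Sum>\<sigma>\<in>T. \<Sum>m\<in>c. if \<sigma> \<in> d m then 1 else 0)"
    unfolding N_def using c by (simp add: sum.If_cases Collect_conj_eq Int_commute)
  also have "\<dots> = (\<Sum>m\<in>c. \<Sum>\<sigma>\<in>T. if \<sigma> \<in> d m then 1 else 0)"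
    by (rule sum.swap)
  also have "\<dots> = (\<Sum>m\<in>c. card {\<sigma> \<in> d m. \<rho> \<in> d \<sigma>})"
  proof (rule sum.cong[OF refl])
    fix m assume "m \<in> c"
    then have "T \<inter> {\<sigma>. \<sigma> \<in> d m} = {\<sigma> \<in> d m. \<rho> \<in> d \<sigma>}" unfolding T_def by auto
    then show "(\<Sum>\<sigma>\<in>T. if \<sigma> \<in> d m then 1 else 0) = card {\<sigma> \<in> d m. \<rho> \<in> d \<sigma>}"
      using T by (simp add: sum.If_cases)
  qed
  finally have "even (\<Sum>\<sigma>\<in>T. N \<sigma>)" using even_paths by (simp add: dvd_sum)
  then have "even (card {\<sigma> \<in> T. odd (N \<sigma>)})" using even_sum_iff[OF T] by blast
  with odd_\<rho> odd_N show False by simp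
qed

theorem mainTheorem5:
  fixes K :: "'v set set"
  assumes "simplicial_complex K"
  shows "(\<forall>c. c \<subseteq> matching_simplices K \<longrightarrow> dJ K (dJ K c) = {}) \<and>
         (\<forall>m \<in> matching_simplices K. \<forall>\<tau> \<in> dJ_simplex K m.
            \<tau> \<in> matching_simplices K \<and> card \<tau> + 1 = card m \<and> J K \<tau> = J K m)"
proof (intro conjI allI impI ballI)
  fix c assume c: "c \<subseteq> matching_simplices K"
  have "matching_simplices K \<subseteq> Pow (face_edges K)"
    unfolding matching_simplices_def is_matching_def by blast
  then have "finite c" using c finite_face_edges[OF assms] by (meson finite_Pow_iff finite_subset)
  moreover have "is_matching K m" if "m \<in> c" for m
    using c that unfolding matching_simplices_def by blast
  ultimately show "dJ K (dJ K c) = {}"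
    unfolding dJ_def
    using mod2_extension_square_zero[of c "dJ_simplex K"] finite_dJ_simplex
      is_matching_finite[OF assms] even_card_dJ_simplex_twice[OF assms] by blast
next
  fix m \<tau> assume m: "m \<in> matching_simplices K" and \<tau>: "\<tau> \<in> dJ_simplex K m"
  then obtain e where e: "e \<in> m" "\<tau> = m - {e}" and card_m: "2 \<le> card m"
    and J_eq: "J K \<tau> = J K m"
    unfolding dJ_simplex_def by blast
  have m: "is_matching K m" using m unfolding matching_simplices_def by blast
  then have card_\<tau>: "card \<tau> + 1 = card m"
    using e card_m is_matching_finite[OF assms m] by simp
  then have "\<tau> \<noteq> {}" using card_m by auto
  then show "\<tau> \<in> matching_simplices K"
    using is_matching_subset[OF m] e unfolding matching_simplices_def by blast
  show "card \<tau> + 1 = card m" "J K \<tau> = J K m" by (fact card_\<tau> J_eq)+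
qed

end
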